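(* (a) Let $E=\bigcup_n E_n$ and $F=\bigcup_n F_n$ be locally convex direct limits of ascending sequences of Banach spaces $(E_n)$ and $(F_n)$ (with injective continuous linear bonding maps), and assume both sequences are compactly regular. Then $E\times F$ (with the product topology) is the locally convex direct limit $\bigcup_n(E_n\times F_n)$, and the sequence $(E_n\times F_n)_n$ is compactly regular. (b) Let $(E_n)_n$ and $(F_n)_n$ be ascending sequences of locally convex spaces with injective continuous linear bonding maps, with locally convex direct limits $E=\bigcup_n E_n$ and $F=\bigcup_n F_n$, and let $\tau_n\colon E_n\to F_n$ be topological embeddings (continuous linear) compatible with the bonding maps, inducing $\tau\colon E\to F$. Assume that for all $m,n\in\mathbb{N}$, every $x\in E_m$ with $\tau(x)\in F_n$ lies in $E_n$, and that $(F_n)_n$ is compactly regular. Then $(E_n)_n$ is compactly regular.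
   Context: An ascending sequence $(E_n)$ of locally convex spaces with injective continuous linear bonding maps and direct limit $E=\bigcup_n E_n$ is compactly regular if for every compact subset $C$ of $E$ there is $n\in\mathbb{N}$ such that $C\subseteq E_n$ and $C$ is compact in $E_n$. *)

theory Defs
  imports "HOL-Analysis.Analysis"
begin

text \<open>A (real) topological vector space is modelled as a linear subspace of an ambient
real vector space (its carrier is the topspace of the topology) such that addition and
scalar multiplication are continuous.\<close>

definition tvs_on :: "'a::real_vector topology \<Rightarrow> bool" where
  "tvs_on T \<longleftrightarrow> subspace (topspace T)
     \<and> continuous_map (prod_topology T T) T (\<lambda>(x, y). x + y)
     \<and> continuous_map (prod_topology euclideanreal T) T (\<lambda>(c, x). c *\<^sub>R x)"

definition lc_topology :: "'a::real_vector topology \<Rightarrow> bool" where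
  "lc_topology T \<longleftrightarrow> tvs_on T \<and>
     (\<forall>U x. openin T U \<and> x \<in> U \<longrightarrow> (\<exists>V. openin T V \<and> convex V \<and> x \<in> V \<and> V \<subseteq> U))"

definition lc_space :: "'a::real_vector topology \<Rightarrow> bool" where
  "lc_space T \<longleftrightarrow> lc_topology T \<and> Hausdorff_space T"

definition linear_on :: "'a::real_vector set \<Rightarrow> ('a \<Rightarrow> 'b::real_vector) \<Rightarrow> bool" where
  "linear_on S f \<longleftrightarrow> (\<forall>x\<in>S. \<forall>y\<in>S. f (x + y) = f x + f y) \<and> (\<forall>c. \<forall>x\<in>S. f (c *\<^sub>R x) = c *\<^sub>R f x)"

definition banach_on :: "'a::real_vector topology \<Rightarrow> bool" where
  "banach_on T \<longleftrightarrow> subspace (topspace T) \<and>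
     (\<exists>N :: 'a \<Rightarrow> real.
        (\<forall>x\<in>topspace T. N x \<ge> 0 \<and> (N x = 0 \<longleftrightarrow> x = 0))
      \<and> (\<forall>x\<in>topspace T. \<forall>y\<in>topspace T. N (x + y) \<le> N x + N y)
      \<and> (\<forall>c. \<forall>x\<in>topspace T. N (c *\<^sub>R x) = \<bar>c\<bar> * N x)
      \<and> Metric_space (topspace T) (\<lambda>x y. N (x - y))
      \<and> T = Metric_space.mtopology (topspace T) (\<lambda>x y. N (x - y))
      \<and> Metric_space.mcomplete (topspace T) (\<lambda>x y. N (x - y)))"

text \<open>Ascending sequence of spaces E_n = topspace (T n) inside a common vector space,
the bonding maps being the (injective, linear) inclusions, required to be continuous.\<close>
definition ascending_seq :: "(nat \<Rightarrow> 'a::real_vector topology) \<Rightarrow> bool" where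
  "ascending_seq T \<longleftrightarrow> (\<forall>n. topspace (T n) \<subseteq> topspace (T (Suc n))
      \<and> continuous_map (T n) (T (Suc n)) id)"

definition lc_direct_limit :: "(nat \<Rightarrow> 'a::real_vector topology) \<Rightarrow> 'a topology \<Rightarrow> bool" where
  "lc_direct_limit T L \<longleftrightarrow>
     lc_topology L \<and> topspace L = (\<Union>n. topspace (T n)) \<and> (\<forall>n. continuous_map (T n) L id)
     \<and> (\<forall>L'. lc_topology L' \<and> topspace L' = (\<Union>n. topspace (T n)) \<and> (\<forall>n. continuous_map (T n) L' id)
            \<longrightarrow> (\<forall>U. openin L' U \<longrightarrow> openin L U))"

definition compactly_regular :: "(nat \<Rightarrow> 'a topology) \<Rightarrow> 'a topology \<Rightarrow> bool" where
  "compactly_regular T L \<longleftrightarrow>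
     (\<forall>C. compactin L C \<longrightarrow> (\<exists>n. C \<subseteq> topspace (T n) \<and> compactin (T n) C))"

end

theory Submission
  imports Defs
begin

text \<open>
(a) The product of the two limit topologies is locally convex, and every locally convex
topology on \<open>E \<times> F\<close> making the inclusions of the steps \<open>E\<^sub>n \<times> F\<^sub>n\<close> continuous makes
\<open>e \<mapsto> (e,0)\<close> and \<open>f \<mapsto> (0,f)\<close> continuous on \<open>E\<close> and \<open>F\<close> by the universal property, hence also
their sum, the identity on \<open>E \<times> F\<close>. For compact regularity, the projections of a compact set
\<open>C \<subseteq> E \<times> F\<close> lie compactly in some \<open>E\<^sub>n\<close> and \<open>F\<^sub>n\<close>, so \<open>C\<close> lies in a compact subset of \<open>E\<^sub>n \<times> F\<^sub>n\<close>,
in which it is closed because \<open>E \<times> F\<close> is Hausdorff. That \<open>E\<close> is Hausdorff is itself a consequence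
of compact regularity: if \<open>v \<noteq> 0\<close> lay in every neighbourhood of \<open>0\<close>, the line \<open>\<real>v\<close> would be compact
in \<open>E\<close>, hence in some Banach space \<open>E\<^sub>n\<close>, where it is unbounded.

(b) The universal property makes the induced map \<open>\<tau> : E \<rightarrow> F\<close> continuous, so the image of a
compact \<open>C \<subseteq> E\<close> lies compactly in some \<open>F\<^sub>n\<close>; the hypothesis on \<open>\<tau>\<close> puts \<open>C\<close> inside \<open>E\<^sub>n\<close>, and since
\<open>\<tau>\<close> embeds \<open>E\<^sub>n\<close> into \<open>F\<^sub>n\<close>, \<open>C\<close> is compact in \<open>E\<^sub>n\<close>.
\<close>

lemma tvs_continuous_map_add:
  assumes "tvs_on L" "continuous_map X L f" "continuous_map X L g"
  shows "continuous_map X L (\<lambda>z. f z + g z)"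
proof -
  have "continuous_map X L ((\<lambda>(x, y). x + y) \<circ> (\<lambda>z. (f z, g z)))"
    using assms by (intro continuous_map_compose[OF continuous_map_pairedI]) (auto simp: tvs_on_def)
  then show ?thesis by (simp add: o_def)
qed

lemma tvs_continuous_map_scaleR:
  assumes "tvs_on L" "continuous_map X euclideanreal h" "continuous_map X L f"
  shows "continuous_map X L (\<lambda>z. h z *\<^sub>R f z)"
proof -
  have "continuous_map X L ((\<lambda>(c, x). c *\<^sub>R x) \<circ> (\<lambda>z. (h z, f z)))"
    using assms by (intro continuous_map_compose[OF continuous_map_pairedI]) (auto simp: tvs_on_def)
  then show ?thesis by (simp add: o_def)
qed

lemma ascending_seq_le:
  assumes "ascending_seq T" "m \<le> n"
  shows "topspace (T m) \<subseteq> topspace (T n)" "continuous_map (T m) (T n) id"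
proof -
  have "topspace (T m) \<subseteq> topspace (T n) \<and> continuous_map (T m) (T n) id"
    using assms(2)
  proof (induction n rule: dec_induct)
    case (step k)
    have "continuous_map (T m) (T (Suc k)) (id \<circ> id)"
      using step.IH assms(1) unfolding ascending_seq_def by (metis continuous_map_compose)
    then have "continuous_map (T m) (T (Suc k)) id" by simp
    moreover have "topspace (T m) \<subseteq> topspace (T (Suc k))"
      using step.IH assms(1) unfolding ascending_seq_def by blast
    ultimately show ?case by blast
  qed simp
  then show "topspace (T m) \<subseteq> topspace (T n)" "continuous_map (T m) (T n) id" by auto
qed

lemma ascending_seq_Union_Times:
  assumes "ascending_seq TE" "ascending_seq TF"
  shows "(\<Union>n. topspace (TE n) \<times> topspace (TF n)) = (\<Union>n. topspace (TE n)) \<times> (\<Union>n. topspace (TF n))"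
proof (intro equalityI subsetI)
  fix p assume "p \<in> (\<Union>n. topspace (TE n)) \<times> (\<Union>n. topspace (TF n))"
  then obtain m k where "fst p \<in> topspace (TE m)" "snd p \<in> topspace (TF k)" by auto
  then have "fst p \<in> topspace (TE (max m k))" "snd p \<in> topspace (TF (max m k))"
    using ascending_seq_le(1)[OF assms(1), of m "max m k"]
      ascending_seq_le(1)[OF assms(2), of k "max m k"] by auto
  then have "p \<in> topspace (TE (max m k)) \<times> topspace (TF (max m k))" by (simp add: mem_Times_iff)
  then show "p \<in> (\<Union>n. topspace (TE n) \<times> topspace (TF n))" by blast
qed blast

lemma ascending_seq_linear_on_Union:
  assumes "ascending_seq T" "\<And>n. linear_on (topspace (T n)) g"
  shows "linear_on (\<Union>n. topspace (T n)) g"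
  unfolding linear_on_def
proof (intro conjI ballI allI)
  fix x y assume "x \<in> (\<Union>n. topspace (T n))" "y \<in> (\<Union>n. topspace (T n))"
  then obtain m k where "x \<in> topspace (T m)" "y \<in> topspace (T k)" by blast
  then have "x \<in> topspace (T (max m k))" "y \<in> topspace (T (max m k))"
    using ascending_seq_le(1)[OF assms(1), of m "max m k"]
      ascending_seq_le(1)[OF assms(1), of k "max m k"] by auto
  then show "g (x + y) = g x + g y" using assms(2) by (simp add: linear_on_def)
next
  fix c x assume "x \<in> (\<Union>n. topspace (T n))"
  then show "g (c *\<^sub>R x) = c *\<^sub>R g x" using assms(2) by (auto simp: linear_on_def)
qed

lemma convex_vimage_linear_on:
  assumes S: "subspace S" and g: "linear_on S g" and W: "convex W"
  shows "convex (g -` W \<inter> S)"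
  unfolding convex_def
proof (intro ballI allI impI)
  fix a b and u v :: real
  assume ab: "a \<in> g -` W \<inter> S" "b \<in> g -` W \<inter> S" and uv: "0 \<le> u" "0 \<le> v" "u + v = 1"
  have "u *\<^sub>R a \<in> S" "v *\<^sub>R b \<in> S" using ab S by (auto simp: subspace_scale)
  then have "g (u *\<^sub>R a + v *\<^sub>R b) = u *\<^sub>R g a + v *\<^sub>R g b"
    using g ab by (auto simp: linear_on_def)
  moreover have "u *\<^sub>R g a + v *\<^sub>R g b \<in> W" using W ab uv unfolding convex_def by auto
  moreover have "u *\<^sub>R a + v *\<^sub>R b \<in> S" using \<open>u *\<^sub>R a \<in> S\<close> \<open>v *\<^sub>R b \<in> S\<close> S by (simp add: subspace_add)
  ultimately show "u *\<^sub>R a + v *\<^sub>R b \<in> g -` W \<inter> S" by simp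
qed

lemma lc_topology_pullback:
  assumes L: "lc_topology L" and S: "subspace S" and g: "linear_on S g"
    and gS: "g ` S \<subseteq> topspace L"
  shows "lc_topology (pullback_topology S g L)"
proof -
  let ?P = "pullback_topology S g L"
  have tL: "tvs_on L" using L by (simp add: lc_topology_def)
  have tp: "topspace ?P = S" using gS by (auto simp: topspace_pullback_topology)
  have cg: "continuous_map ?P L g"
    using continuous_map_pullback[OF continuous_map_id, of S g L] by simp
  have add: "continuous_map (prod_topology ?P ?P) ?P (\<lambda>(x, y). x + y)"
  proof (rule continuous_map_pullback')
    have "continuous_map (prod_topology ?P ?P) L (\<lambda>p. g (fst p) + g (snd p))"
      using tL cg by (intro tvs_continuous_map_add)
        (auto intro: continuous_map_compose[unfolded o_def, OF continuous_map_fst]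
          continuous_map_compose[unfolded o_def, OF continuous_map_snd])
    then show "continuous_map (prod_topology ?P ?P) L (g \<circ> (\<lambda>(x, y). x + y))"
      by (rule continuous_map_eq) (use g tp in \<open>auto simp: linear_on_def\<close>)
    show "topspace (prod_topology ?P ?P) \<subseteq> (\<lambda>(x, y). x + y) -` S"
      using tp S by (auto simp: subspace_add)
  qed
  have scale: "continuous_map (prod_topology euclideanreal ?P) ?P (\<lambda>(c, x). c *\<^sub>R x)"
  proof (rule continuous_map_pullback')
    have "continuous_map (prod_topology euclideanreal ?P) L (\<lambda>p. fst p *\<^sub>R g (snd p))"
      using tL cg by (intro tvs_continuous_map_scaleR)
        (auto intro: continuous_map_fst continuous_map_compose[unfolded o_def, OF continuous_map_snd])
    then show "continuous_map (prod_topology euclideanreal ?P) L (g \<circ> (\<lambda>(c, x). c *\<^sub>R x))"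
      by (rule continuous_map_eq) (use g tp in \<open>auto simp: linear_on_def\<close>)
    show "topspace (prod_topology euclideanreal ?P) \<subseteq> (\<lambda>(c, x). c *\<^sub>R x) -` S"
      using tp S by (auto simp: subspace_scale)
  qed
  have "\<exists>V. openin ?P V \<and> convex V \<and> x \<in> V \<and> V \<subseteq> U" if UP: "openin ?P U" "x \<in> U" for U x
  proof -
    obtain V where V: "openin L V" "U = g -` V \<inter> S"
      using openin_pullback_topology[THEN iffD1, OF UP(1)] by blast
    moreover have "g x \<in> V" using UP(2) V(2) by blast
    ultimately obtain W where W: "openin L W" "convex W" "g x \<in> W" "W \<subseteq> V"
      using L unfolding lc_topology_def by meson
    have "openin ?P (g -` W \<inter> S)" using W by (auto simp: openin_pullback_topology)
    moreover have "convex (g -` W \<inter> S)" by (rule convex_vimage_linear_on[OF S g W(2)])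
    moreover have "x \<in> g -` W \<inter> S" "g -` W \<inter> S \<subseteq> U" using W V UP(2) by auto
    ultimately show ?thesis by blast
  qed
  then show ?thesis unfolding lc_topology_def tvs_on_def using tp S add scale by auto
qed

lemma lc_direct_limit_continuous_map:
  assumes L: "lc_direct_limit T L" and M: "lc_topology M" and g: "linear_on (topspace L) g"
    and cont: "\<And>n. continuous_map (T n) M g"
  shows "continuous_map L M g"
proof -
  let ?E = "topspace L"
  let ?P = "pullback_topology ?E g M"
  have tpL: "?E = (\<Union>n. topspace (T n))" using L by (simp add: lc_direct_limit_def)
  have "subspace ?E" using L unfolding lc_direct_limit_def lc_topology_def tvs_on_def by blast
  moreover have gE: "g ` ?E \<subseteq> topspace M"
    using cont tpL by (auto dest: continuous_map_image_subset_topspace)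
  ultimately have "lc_topology ?P" using lc_topology_pullback[OF M _ g] by blast
  moreover have tpP: "topspace ?P = ?E" using gE by (auto simp: topspace_pullback_topology)
  moreover have "continuous_map (T n) ?P id" for n
    using cont[of n] tpL by (intro continuous_map_pullback') auto
  ultimately have openP: "openin ?P U \<Longrightarrow> openin L U" for U
    using L tpL unfolding lc_direct_limit_def by blast
  show ?thesis
    unfolding continuous_map_alt
  proof (intro conjI allI impI)
    fix V assume "openin M V"
    then show "openin L (g -` V \<inter> ?E)" by (intro openP) (auto simp: openin_pullback_topology)
  qed (use gE in auto)
qed

lemma lc_direct_limit_tvs_on: "lc_direct_limit T L \<Longrightarrow> tvs_on L"
  by (simp add: lc_direct_limit_def lc_topology_def)

lemma lc_direct_limit_continuous_map_id: "lc_direct_limit T L \<Longrightarrow> continuous_map (T n) L id"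
  by (simp add: lc_direct_limit_def)

lemma lc_topology_prod:
  assumes X: "lc_topology X" and Y: "lc_topology Y"
  shows "lc_topology (prod_topology X Y)"
proof -
  let ?P = "prod_topology X Y"
  have tX: "tvs_on X" and tY: "tvs_on Y" using X Y by (auto simp: lc_topology_def)
  have "subspace (topspace ?P)"
    using tX tY unfolding tvs_on_def subspace_def by (auto simp: zero_prod_def)
  moreover have "continuous_map (prod_topology ?P ?P) ?P (\<lambda>(x, y). x + y)"
  proof -
    have "continuous_map (prod_topology ?P ?P) X (\<lambda>z. fst (fst z))"
      "continuous_map (prod_topology ?P ?P) X (\<lambda>z. fst (snd z))"
      "continuous_map (prod_topology ?P ?P) Y (\<lambda>z. snd (fst z))"
      "continuous_map (prod_topology ?P ?P) Y (\<lambda>z. snd (snd z))"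
      by (auto intro: continuous_map_fst_of[unfolded o_def] continuous_map_snd_of[unfolded o_def]
          continuous_map_fst continuous_map_snd)
    then have "continuous_map (prod_topology ?P ?P) ?P
            (\<lambda>z. (fst (fst z) + fst (snd z), snd (fst z) + snd (snd z)))"
      by (intro continuous_map_pairedI tvs_continuous_map_add[OF tX] tvs_continuous_map_add[OF tY])
    then show ?thesis by (rule continuous_map_eq) auto
  qed
  moreover have "continuous_map (prod_topology euclideanreal ?P) ?P (\<lambda>(c, x). c *\<^sub>R x)"
  proof -
    have "continuous_map (prod_topology euclideanreal ?P) X (\<lambda>z. fst (snd z))"
      "continuous_map (prod_topology euclideanreal ?P) Y (\<lambda>z. snd (snd z))"
      by (auto intro: continuous_map_fst_of[unfolded o_def] continuous_map_snd_of[unfolded o_def]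
          continuous_map_snd)
    then have "continuous_map (prod_topology euclideanreal ?P) ?P
            (\<lambda>z. (fst z *\<^sub>R fst (snd z), fst z *\<^sub>R snd (snd z)))"
      by (intro continuous_map_pairedI tvs_continuous_map_scaleR[OF tX] tvs_continuous_map_scaleR[OF tY]
          continuous_map_fst)
    then show ?thesis by (rule continuous_map_eq) auto
  qed
  moreover have "\<exists>V. openin ?P V \<and> convex V \<and> p \<in> V \<and> V \<subseteq> U" if UP: "openin ?P U" "p \<in> U" for U p
  proof -
    obtain U1 V1 where UV: "openin X U1" "openin Y V1" "fst p \<in> U1" "snd p \<in> V1" "U1 \<times> V1 \<subseteq> U"
      using UP unfolding openin_prod_topology_alt by (metis prod.collapse)
    obtain W1 where W1: "openin X W1" "convex W1" "fst p \<in> W1" "W1 \<subseteq> U1"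
      using X UV unfolding lc_topology_def by blast
    obtain W2 where W2: "openin Y W2" "convex W2" "snd p \<in> W2" "W2 \<subseteq> V1"
      using Y UV unfolding lc_topology_def by blast
    have "openin ?P (W1 \<times> W2)" "convex (W1 \<times> W2)" "p \<in> W1 \<times> W2" "W1 \<times> W2 \<subseteq> U"
      using W1 W2 UV by (auto simp: openin_prod_Times_iff convex_Times mem_Times_iff)
    then show ?thesis by blast
  qed
  ultimately show ?thesis unfolding lc_topology_def tvs_on_def by blast
qed

lemma continuous_map_id_prod_topology:
  assumes "continuous_map X X' id" "continuous_map Y Y' id"
  shows "continuous_map (prod_topology X Y) (prod_topology X' Y') id"
proof -
  have "continuous_map (prod_topology X Y) (prod_topology X' Y') (\<lambda>p. (id (fst p), id (snd p)))"
    using assms by (intro continuous_map_pairedI continuous_map_compose[OF continuous_map_fst, unfolded o_def]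
        continuous_map_compose[OF continuous_map_snd, unfolded o_def])
  then show ?thesis by (simp add: id_def)
qed

lemma lc_direct_limit_prod:
  assumes aE: "ascending_seq TE" and aF: "ascending_seq TF"
    and zE: "\<And>n. 0 \<in> topspace (TE n)" and zF: "\<And>n. 0 \<in> topspace (TF n)"
    and dE: "lc_direct_limit TE LE" and dF: "lc_direct_limit TF LF"
  shows "lc_direct_limit (\<lambda>n. prod_topology (TE n) (TF n)) (prod_topology LE LF)"
  unfolding lc_direct_limit_def
proof (intro conjI allI impI)
  let ?P = "prod_topology LE LF"
  note ciE = lc_direct_limit_continuous_map_id[OF dE] and ciF = lc_direct_limit_continuous_map_id[OF dF]
  show "lc_topology ?P"
    using dE dF by (intro lc_topology_prod) (auto simp: lc_direct_limit_def)
  show tpP: "topspace ?P = (\<Union>n. topspace (prod_topology (TE n) (TF n)))"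
    using ascending_seq_Union_Times[OF aE aF] dE dF by (simp add: lc_direct_limit_def)
  show "continuous_map (prod_topology (TE n) (TF n)) ?P id" for n
    using ciE ciF by (rule continuous_map_id_prod_topology)
  fix L' U
  assume L': "lc_topology L' \<and> topspace L' = (\<Union>n. topspace (prod_topology (TE n) (TF n)))
      \<and> (\<forall>n. continuous_map (prod_topology (TE n) (TF n)) L' id)"
    and U: "openin L' U"
  have tL': "tvs_on L'" using L' by (simp add: lc_topology_def)
  have left: "continuous_map LE L' (\<lambda>e. (e, 0))"
  proof (rule lc_direct_limit_continuous_map[OF dE])
    show "continuous_map (TE n) L' (\<lambda>e. (e, 0))" for n
    proof -
      have "continuous_map (TE n) (prod_topology (TE n) (TF n)) (\<lambda>e. (id e, 0))"
        using zF by (intro continuous_map_pairedI) auto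
      moreover have "continuous_map (prod_topology (TE n) (TF n)) L' id" using L' by blast
      ultimately show ?thesis using continuous_map_compose by (fastforce simp: o_def)
    qed
  qed (use L' in \<open>auto simp: linear_on_def\<close>)
  have right: "continuous_map LF L' (\<lambda>f. (0, f))"
  proof (rule lc_direct_limit_continuous_map[OF dF])
    show "continuous_map (TF n) L' (\<lambda>f. (0, f))" for n
    proof -
      have "continuous_map (TF n) (prod_topology (TE n) (TF n)) (\<lambda>f. (0, id f))"
        using zE by (intro continuous_map_pairedI) auto
      moreover have "continuous_map (prod_topology (TE n) (TF n)) L' id" using L' by blast
      ultimately show ?thesis using continuous_map_compose by (fastforce simp: o_def)
    qed
  qed (use L' in \<open>auto simp: linear_on_def\<close>)
  have "continuous_map ?P L' (\<lambda>p. (fst p, 0) + (0, snd p))"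
    using tvs_continuous_map_add[OF tL' continuous_map_compose[OF continuous_map_fst left]
        continuous_map_compose[OF continuous_map_snd right]]
    by (simp add: o_def)
  then have "continuous_map ?P L' id" by (rule continuous_map_eq) auto
  then show "openin ?P U"
    using topology_finer_continuous_id[of L' ?P] L' tpP U by auto
qed

lemma tvs_Hausdorff_space_if_separated_from_zero:
  assumes L: "tvs_on L"
    and sep: "\<And>v. v \<in> topspace L \<Longrightarrow> v \<noteq> 0 \<Longrightarrow> \<exists>U. openin L U \<and> 0 \<in> U \<and> v \<notin> U"
  shows "Hausdorff_space L"
  unfolding Hausdorff_space_def
proof (intro allI impI)
  fix x y assume xy: "x \<in> topspace L \<and> y \<in> topspace L \<and> x \<noteq> y"
  have sub: "subspace (topspace L)" using L by (simp add: tvs_on_def)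
  define v where "v = x - y"
  have vL: "v \<in> topspace L" using xy sub by (simp add: v_def subspace_diff)
  obtain U where U: "openin L U" "0 \<in> U" "v \<notin> U" using sep[OF vL] xy by (auto simp: v_def)
  define \<psi> where "\<psi> p = v + ((-1) *\<^sub>R fst p + snd p)" for p
  \<comment> \<open>\<open>\<psi> (x, y) = 0 \<in> U\<close> but \<open>\<psi> (z, z) = v \<notin> U\<close>, which separates \<open>x\<close> from \<open>y\<close>\<close>
  have "continuous_map (prod_topology L L) L (\<lambda>p. (-1) *\<^sub>R fst p)"
    by (rule tvs_continuous_map_scaleR[OF L _ continuous_map_fst]) simp
  then have "continuous_map (prod_topology L L) L (\<lambda>p. (-1) *\<^sub>R fst p + snd p)"
    by (rule tvs_continuous_map_add[OF L _ continuous_map_snd])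
  then have cont_\<psi>: "continuous_map (prod_topology L L) L \<psi>"
    unfolding \<psi>_def by (rule tvs_continuous_map_add[OF L, rotated]) (use vL in simp)
  define G where "G = {p \<in> topspace (prod_topology L L). \<psi> p \<in> U}"
  have G: "openin (prod_topology L L) G"
    unfolding G_def using cont_\<psi> U(1) by (rule openin_continuous_map_preimage)
  have "(x, y) \<in> G" using xy U by (simp add: G_def \<psi>_def v_def)
  then obtain A B where AB: "openin L A" "openin L B" "x \<in> A" "y \<in> B" "A \<times> B \<subseteq> G"
    using G[unfolded openin_prod_topology_alt, rule_format] by metis
  have "disjnt A B"
    unfolding disjnt_iff
  proof (intro allI notI)
    fix z assume "z \<in> A \<and> z \<in> B"
    then have "(z, z) \<in> G" using AB(5) by blast
    then show False using U(3) by (simp add: G_def \<psi>_def)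
  qed
  then show "\<exists>U V. openin L U \<and> openin L V \<and> x \<in> U \<and> y \<in> V \<and> disjnt U V" using AB by blast
qed

lemma tvs_compactin_line_if_in_all_nhds_zero:
  assumes L: "tvs_on L" and v: "v \<in> topspace L"
    and nhds: "\<And>U. openin L U \<Longrightarrow> 0 \<in> U \<Longrightarrow> v \<in> U"
  shows "compactin L (range (\<lambda>c. c *\<^sub>R v))"
  unfolding compactin_def
proof (intro conjI allI impI)
  have sub: "subspace (topspace L)" using L by (simp add: tvs_on_def)
  show "range (\<lambda>c. c *\<^sub>R v) \<subseteq> topspace L" using v sub by (auto simp: subspace_scale)
  fix \<U> assume \<U>: "(\<forall>B\<in>\<U>. openin L B) \<and> range (\<lambda>c. c *\<^sub>R v) \<subseteq> \<Union>\<U>"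
  have "0 *\<^sub>R v \<in> \<Union>\<U>" using \<U> by blast
  then obtain B where B: "B \<in> \<U>" "0 \<in> B" by auto
  \<comment> \<open>the member of the cover containing \<open>0\<close> already covers the whole line\<close>
  have "c *\<^sub>R v \<in> B" for c
  proof -
    have "continuous_map L L (\<lambda>z. c *\<^sub>R z)"
      using tvs_continuous_map_scaleR[OF L, of L "\<lambda>_. c" id] by simp
    then have "openin L {z \<in> topspace L. c *\<^sub>R z \<in> B}"
      using B \<U> by (intro openin_continuous_map_preimage) auto
    moreover have "0 \<in> {z \<in> topspace L. c *\<^sub>R z \<in> B}" using B sub by (auto simp: subspace_0)
    ultimately show ?thesis using nhds by blast
  qed
  then show "\<exists>\<F>. finite \<F> \<and> \<F> \<subseteq> \<U> \<and> range (\<lambda>c. c *\<^sub>R v) \<subseteq> \<Union>\<F>"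
    using B by (intro exI[of _ "{B}"]) auto
qed

lemma banach_on_0: "banach_on T \<Longrightarrow> 0 \<in> topspace T"
  by (simp add: banach_on_def subspace_0)

lemma banach_not_compactin_line:
  assumes T: "banach_on T" and v: "v \<in> topspace T" "v \<noteq> 0"
  shows "\<not> compactin T (range (\<lambda>c. c *\<^sub>R v))"
proof
  assume compact: "compactin T (range (\<lambda>c. c *\<^sub>R v))"
  obtain N :: "_ \<Rightarrow> real" where
    N0: "\<forall>x\<in>topspace T. N x \<ge> 0 \<and> (N x = 0 \<longleftrightarrow> x = 0)"
    and Nscale: "\<forall>c. \<forall>x\<in>topspace T. N (c *\<^sub>R x) = \<bar>c\<bar> * N x"
    and ms: "Metric_space (topspace T) (\<lambda>x y. N (x - y))"
    and Tm: "T = Metric_space.mtopology (topspace T) (\<lambda>x y. N (x - y))"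
    using T unfolding banach_on_def by (elim conjE exE) (rule that; assumption)
  have "Metric_space.mbounded (topspace T) (\<lambda>x y. N (x - y)) (range (\<lambda>c. c *\<^sub>R v))"
    using Metric_space.compactin_imp_mbounded[OF ms] compact Tm by simp
  then obtain B where B: "\<And>c. N (c *\<^sub>R v - 0 *\<^sub>R v) \<le> B"
    unfolding Metric_space.mbounded_alt[OF ms] by blast
  have Nv: "N v > 0" using N0 v by force
  have "N (((B + 1) / N v) *\<^sub>R v) = \<bar>B + 1\<bar>"
    using Nscale v Nv by (simp add: abs_divide)
  with B[of "(B + 1) / N v"] show False by simp
qed

lemma compactly_regular_banach_Hausdorff_space:
  assumes L: "tvs_on L" and T: "\<And>n. banach_on (T n)" and reg: "compactly_regular T L"
  shows "Hausdorff_space L"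
proof (rule tvs_Hausdorff_space_if_separated_from_zero[OF L], rule ccontr)
  fix v assume v: "v \<in> topspace L" "v \<noteq> 0" and "\<nexists>U. openin L U \<and> 0 \<in> U \<and> v \<notin> U"
  then have "compactin L (range (\<lambda>c. c *\<^sub>R v))"
    by (intro tvs_compactin_line_if_in_all_nhds_zero[OF L]) auto
  then obtain n where n: "range (\<lambda>c. c *\<^sub>R v) \<subseteq> topspace (T n)" "compactin (T n) (range (\<lambda>c. c *\<^sub>R v))"
    using reg unfolding compactly_regular_def by blast
  have "v \<in> topspace (T n)" using n(1) by (metis rangeI scaleR_one subsetD)
  then show False using banach_not_compactin_line[OF T _ v(2)] n(2) by blast
qed

lemma compactly_regular_prod:
  assumes aE: "ascending_seq TE" and aF: "ascending_seq TF"
    and ciE: "\<And>n. continuous_map (TE n) LE id" and ciF: "\<And>n. continuous_map (TF n) LF id"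
    and HE: "Hausdorff_space LE" and HF: "Hausdorff_space LF"
    and rE: "compactly_regular TE LE" and rF: "compactly_regular TF LF"
  shows "compactly_regular (\<lambda>n. prod_topology (TE n) (TF n)) (prod_topology LE LF)"
  unfolding compactly_regular_def
proof (intro allI impI)
  let ?P = "prod_topology LE LF"
  fix C assume C: "compactin ?P C"
  obtain m where m: "compactin (TE m) (fst ` C)"
    using rE image_compactin[OF C continuous_map_fst] unfolding compactly_regular_def by blast
  obtain k where k: "compactin (TF k) (snd ` C)"
    using rF image_compactin[OF C continuous_map_snd] unfolding compactly_regular_def by blast
  define n where "n = max m k"
  let ?Pn = "prod_topology (TE n) (TF n)"
  have "compactin (TE n) (fst ` C)"
    using image_compactin[OF m ascending_seq_le(2)[OF aE, of m n]] by (simp add: n_def)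
  moreover have "compactin (TF n) (snd ` C)"
    using image_compactin[OF k ascending_seq_le(2)[OF aF, of k n]] by (simp add: n_def)
  ultimately have K: "compactin ?Pn (fst ` C \<times> snd ` C)" by (simp add: compactin_Times)
  have CK: "C \<subseteq> fst ` C \<times> snd ` C" by force
  \<comment> \<open>Hausdorffness makes \<open>C\<close> closed in the limit, hence in the finer topology of the step\<close>
  have "closedin ?P C"
    using compactin_imp_closedin[OF _ C] HE HF by (simp add: Hausdorff_space_prod_topology)
  then have "closedin ?Pn {p \<in> topspace ?Pn. id p \<in> C}"
    by (rule closedin_continuous_map_preimage[OF continuous_map_id_prod_topology[OF ciE ciF]])
  moreover have "{p \<in> topspace ?Pn. id p \<in> C} = C"
    using CK compactin_subset_topspace[OF K] by auto
  ultimately have "compactin ?Pn C" using closed_compactin[OF K CK] by simp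
  then show "\<exists>n. C \<subseteq> topspace (prod_topology (TE n) (TF n)) \<and> compactin (prod_topology (TE n) (TF n)) C"
    using compactin_subset_topspace by blast
qed

lemma compactly_regular_embedding:
  assumes aE: "ascending_seq TE" and dE: "lc_direct_limit TE LE" and dF: "lc_direct_limit TF LF"
    and emb: "\<And>n. embedding_map (TE n) (TF n) \<tau>" and lin: "\<And>n. linear_on (topspace (TE n)) \<tau>"
    and steps: "\<And>m n x. x \<in> topspace (TE m) \<Longrightarrow> \<tau> x \<in> topspace (TF n) \<Longrightarrow> x \<in> topspace (TE n)"
    and rF: "compactly_regular TF LF"
  shows "compactly_regular TE LE"
  unfolding compactly_regular_def
proof (intro allI impI)
  have tpE: "topspace LE = (\<Union>n. topspace (TE n))" using dE by (simp add: lc_direct_limit_def)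
  have "continuous_map (TE n) LF \<tau>" for n
  proof -
    have "continuous_map (TE n) (TF n) \<tau>"
      using emb[of n] homeomorphic_imp_continuous_map continuous_map_in_subtopology
      unfolding embedding_map_def by blast
    then show ?thesis
      using continuous_map_compose[OF _ lc_direct_limit_continuous_map_id[OF dF]] by fastforce
  qed
  then have cont_\<tau>: "continuous_map LE LF \<tau>"
    using dF ascending_seq_linear_on_Union[OF aE lin] tpE
    by (intro lc_direct_limit_continuous_map[OF dE]) (auto simp: lc_direct_limit_def)
  fix C assume C: "compactin LE C"
  then obtain n where n: "\<tau> ` C \<subseteq> topspace (TF n)" "compactin (TF n) (\<tau> ` C)"
    using rF image_compactin[OF C cont_\<tau>] unfolding compactly_regular_def by blast
  have Cn: "C \<subseteq> topspace (TE n)"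
  proof
    fix x assume "x \<in> C"
    then obtain m where "x \<in> topspace (TE m)" using compactin_subset_topspace[OF C] tpE by blast
    then show "x \<in> topspace (TE n)" using steps n(1) \<open>x \<in> C\<close> by blast
  qed
  have "compactin (subtopology (TF n) (\<tau> ` topspace (TE n))) (\<tau> ` C)"
    using n Cn by (auto simp: compactin_subtopology)
  then have "compactin (TE n) C"
    using homeomorphic_map_compactness[OF emb[of n, unfolded embedding_map_def] Cn] by simp
  then show "\<exists>n. C \<subseteq> topspace (TE n) \<and> compactin (TE n) C" using Cn by blast
qed

theorem lemma4p7:
  shows
  "(\<forall>(TE :: nat \<Rightarrow> 'a::real_vector topology) (TF :: nat \<Rightarrow> 'b::real_vector topology) LE LF.
      ascending_seq TE \<and> ascending_seq TF
      \<and> (\<forall>n. banach_on (TE n)) \<and> (\<forall>n. banach_on (TF n))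
      \<and> lc_direct_limit TE LE \<and> lc_direct_limit TF LF
      \<and> compactly_regular TE LE \<and> compactly_regular TF LF
      \<longrightarrow> lc_direct_limit (\<lambda>n. prod_topology (TE n) (TF n)) (prod_topology LE LF)
        \<and> compactly_regular (\<lambda>n. prod_topology (TE n) (TF n)) (prod_topology LE LF))
   \<and>
   (\<forall>(TE :: nat \<Rightarrow> 'c::real_vector topology) (TF :: nat \<Rightarrow> 'd::real_vector topology) LE LF
      (\<tau> :: 'c \<Rightarrow> 'd).
      ascending_seq TE \<and> ascending_seq TF
      \<and> (\<forall>n. lc_space (TE n)) \<and> (\<forall>n. lc_space (TF n))
      \<and> lc_direct_limit TE LE \<and> lc_direct_limit TF LF
      \<and> (\<forall>n. embedding_map (TE n) (TF n) \<tau> \<and> linear_on (topspace (TE n)) \<tau>)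
      \<and> (\<forall>m n x. x \<in> topspace (TE m) \<and> \<tau> x \<in> topspace (TF n) \<longrightarrow> x \<in> topspace (TE n))
      \<and> compactly_regular TF LF
      \<longrightarrow> compactly_regular TE LE)"
proof (intro conjI allI impI; elim conjE)
  fix TE :: "nat \<Rightarrow> 'a::real_vector topology" and TF :: "nat \<Rightarrow> 'b::real_vector topology" and LE LF
  assume aE: "ascending_seq TE" and aF: "ascending_seq TF"
    and bE: "\<forall>n. banach_on (TE n)" and bF: "\<forall>n. banach_on (TF n)"
    and dE: "lc_direct_limit TE LE" and dF: "lc_direct_limit TF LF"
    and rE: "compactly_regular TE LE" and rF: "compactly_regular TF LF"
  show "lc_direct_limit (\<lambda>n. prod_topology (TE n) (TF n)) (prod_topology LE LF)"
    using aE aF bE bF dE dF by (intro lc_direct_limit_prod) (auto intro: banach_on_0)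
  have "Hausdorff_space LE" "Hausdorff_space LF"
    using bE bF rE rF lc_direct_limit_tvs_on[OF dE] lc_direct_limit_tvs_on[OF dF]
    by (auto intro: compactly_regular_banach_Hausdorff_space)
  then show "compactly_regular (\<lambda>n. prod_topology (TE n) (TF n)) (prod_topology LE LF)"
    using aE aF rE rF lc_direct_limit_continuous_map_id[OF dE] lc_direct_limit_continuous_map_id[OF dF]
    by (intro compactly_regular_prod) auto
next
  fix TE :: "nat \<Rightarrow> 'c::real_vector topology" and TF :: "nat \<Rightarrow> 'd::real_vector topology" and LE LF
    and \<tau> :: "'c \<Rightarrow> 'd"
  assume "ascending_seq TE" "lc_direct_limit TE LE" "lc_direct_limit TF LF"
    "\<forall>n. embedding_map (TE n) (TF n) \<tau> \<and> linear_on (topspace (TE n)) \<tau>"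
    "\<forall>m n x. x \<in> topspace (TE m) \<and> \<tau> x \<in> topspace (TF n) \<longrightarrow> x \<in> topspace (TE n)"
    "compactly_regular TF LF"
  then show "compactly_regular TE LE"
    by (intro compactly_regular_embedding[of TE LE TF LF \<tau>]) blast+
qed

end
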